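(* For every $\varepsilon>0$ there exists a constant $a_\varepsilon>0$, independent of $n$, such that for every dimension $n\ge1$, $$\frac{\operatorname{vol}\big(B_1^n+(a_\varepsilon/\sqrt{n})\,B_2^n\big)}{\operatorname{vol}\big((a_\varepsilon/\sqrt{n})\,B_2^n\big)}\le 2^{\varepsilon n}.$$
   Context: For $p\in[1,\infty]$, $B_p^n=\{x\in\mathbb{R}^n : \|x\|_p\le 1\}$ is the closed unit $\ell_p$-ball in $\mathbb{R}^n$; $\operatorname{vol}$ is $n$-dimensional Lebesgue measure and $A+C=\{a+c: a\in A, c\in C\}$ is the Minkowski sum. *)

theory Defs
  imports "HOL-Analysis.Analysis"
begin

text \<open>Points of R^n are represented as extensional functions in PiE {..<n} (\<lambda>_. UNIV);
  n-dimensional Lebesgue measure is the product of n copies of lborel.\<close>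

definition Rn :: "nat \<Rightarrow> (nat \<Rightarrow> real) set" where
  "Rn n = PiE {..<n} (\<lambda>_. UNIV)"

definition lpball1 :: "nat \<Rightarrow> (nat \<Rightarrow> real) set" where
  "lpball1 n = {x \<in> Rn n. (\<Sum>i<n. \<bar>x i\<bar>) \<le> 1}"

definition lpball2 :: "nat \<Rightarrow> (nat \<Rightarrow> real) set" where
  "lpball2 n = {x \<in> Rn n. sqrt (\<Sum>i<n. (x i)\<^sup>2) \<le> 1}"

definition vscale :: "nat \<Rightarrow> real \<Rightarrow> (nat \<Rightarrow> real) set \<Rightarrow> (nat \<Rightarrow> real) set" where
  "vscale n r A = (\<lambda>x. restrict (\<lambda>i. r * x i) {..<n}) ` A"

definition msum :: "nat \<Rightarrow> (nat \<Rightarrow> real) set \<Rightarrow> (nat \<Rightarrow> real) set \<Rightarrow> (nat \<Rightarrow> real) set" where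
  "msum n A C = {restrict (\<lambda>i. a i + c i) {..<n} | a c. a \<in> A \<and> c \<in> C}"

definition vol :: "nat \<Rightarrow> (nat \<Rightarrow> real) set \<Rightarrow> real" where
  "vol n S = measure (PiM {..<n} (\<lambda>_. (lborel :: real measure))) S"

end

theory Submission
  imports Defs "HOL-Probability.Probability"
begin

text \<open>Let \<open>t = a / sqrt n\<close> and \<open>K = B\<^sub>1\<^sup>n + t B\<^sub>2\<^sup>n\<close>. Since \<open>K \<subseteq> (1 + t) B\<^sub>2\<^sup>n\<close>, the volume
  ratio is at most \<open>(1 + sqrt n / a)\<^sup>n\<close>, which settles the finitely many small dimensions once
  \<open>a\<close> is large. For large \<open>n\<close> both volumes are compared with the Gaussian integral
  \<open>\<integral> exp (- l \<parallel>x\<parallel>\<^sup>2) = (pi / l)\<^bsup>n/2\<^esup>\<close> at \<open>l = (1 + e) n / (2 t\<^sup>2)\<close>, whose mean of \<open>\<parallel>x\<parallel>\<^sup>2\<close>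
  is slightly below \<open>t\<^sup>2\<close>. By concentration the ball \<open>t B\<^sub>2\<^sup>n\<close> carries half of the Gaussian
  mass, so its volume is at least \<open>exp ((1 - e) n / 2) (pi / l)\<^bsup>n/2\<^esup> / 2\<close>. On the other hand
  \<open>K\<close> lies in the sublevel set \<open>\<Sum>\<^sub>i h\<^sub>m(x\<^sub>i) \<le> m + t\<^sup>2\<close> of the Huber function \<open>h\<^sub>m\<close>, and an
  exponential Chebyshev bound with the product structure of \<open>exp (- l \<Sum>\<^sub>i h\<^sub>m(x\<^sub>i))\<close> bounds
  its volume by \<open>exp ((1 - e) n / 2 + 3 e n) (pi / l)\<^bsup>n/2\<^esup>\<close> when \<open>m = e n / l\<close>. The ratio
  is therefore at most \<open>2 exp (3 e n) \<le> exp (4 e n)\<close>.\<close>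

abbreviation lborel_prod :: "nat \<Rightarrow> (nat \<Rightarrow> real) measure" where
  "lborel_prod n \<equiv> PiM {..<n} (\<lambda>_. lborel)"

definition sqnorm :: "nat \<Rightarrow> (nat \<Rightarrow> real) \<Rightarrow> real" where
  "sqnorm n x = (\<Sum>i<n. (x i)\<^sup>2)"

lemma sqnorm_measurable [measurable]: "sqnorm n \<in> borel_measurable (lborel_prod n)"
  unfolding sqnorm_def by measurable

lemma sqnorm_restrict_scale: "sqnorm n (\<lambda>i\<in>{..<n}. c * x i) = c\<^sup>2 * sqnorm n x"
  unfolding sqnorm_def by (simp add: power_mult_distrib sum_distrib_left)

subsection \<open>Gaussian integrals\<close>

lemma nn_integral_exp_neg_square:
  fixes c :: real
  assumes c: "c > 0"
  shows "(\<integral>\<^sup>+s. ennreal (exp (- c * s\<^sup>2)) \<partial>lborel) = ennreal (sqrt (pi / c))"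
proof -
  define \<sigma> where "\<sigma> = 1 / sqrt (2 * c)"
  have \<sigma>: "\<sigma> > 0" "2 * \<sigma>\<^sup>2 = 1 / c" using c by (simp_all add: \<sigma>_def power_divide)
  have density: "exp (- c * s\<^sup>2) = sqrt (pi / c) * normal_density 0 \<sigma> s" for s
  proof -
    have "2 * pi * \<sigma>\<^sup>2 = pi / c" "- ((s - 0)\<^sup>2) / (2 * \<sigma>\<^sup>2) = - c * s\<^sup>2"
      using \<sigma> c by (simp_all add: field_simps)
    then show ?thesis using c by (simp add: normal_density_def)
  qed
  have "(\<integral>\<^sup>+s. ennreal (exp (- c * s\<^sup>2)) \<partial>lborel)
      = (\<integral>\<^sup>+s. ennreal (sqrt (pi / c)) * ennreal (normal_density 0 \<sigma> s) \<partial>lborel)"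
    by (intro nn_integral_cong, subst density, rule ennreal_mult) (use c in auto)
  also have "\<dots> = ennreal (sqrt (pi / c)) * (\<integral>\<^sup>+s. ennreal (normal_density 0 \<sigma> s) \<partial>lborel)"
    by (rule nn_integral_cmult) simp
  also have "(\<integral>\<^sup>+s. ennreal (normal_density 0 \<sigma> s) \<partial>lborel) = 1"
    using \<sigma> by (simp add: nn_integral_eq_integral)
  finally show ?thesis by simp
qed

lemma nn_integral_lborel_prod_prod:
  assumes [measurable]: "f \<in> borel_measurable borel" and nonneg: "\<And>s. 0 \<le> f s"
  shows "(\<integral>\<^sup>+x. ennreal (\<Prod>i<n. f (x i)) \<partial>lborel_prod n) = (\<integral>\<^sup>+s. ennreal (f s) \<partial>lborel) ^ n"
proof -
  interpret product_sigma_finite "\<lambda>_. lborel :: real measure" by standard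
  have "(\<integral>\<^sup>+x. ennreal (\<Prod>i<n. f (x i)) \<partial>lborel_prod n)
      = (\<integral>\<^sup>+x. (\<Prod>i<n. ennreal (f (x i))) \<partial>lborel_prod n)"
    by (simp add: prod_ennreal nonneg)
  also have "\<dots> = (\<Prod>i<n. \<integral>\<^sup>+s. ennreal (f s) \<partial>lborel)"
    by (rule product_nn_integral_prod) auto
  finally show ?thesis by simp
qed

lemma nn_integral_exp_neg_sqnorm:
  fixes c :: real
  assumes c: "c > 0"
  shows "(\<integral>\<^sup>+x. ennreal (exp (- c * sqnorm n x)) \<partial>lborel_prod n) = ennreal (sqrt (pi / c) ^ n)"
proof -
  have "exp (- c * sqnorm n x) = (\<Prod>i<n. exp (- c * (x i)\<^sup>2))" for x
    by (simp add: sqnorm_def sum_distrib_left exp_sum[symmetric] sum_negf)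
  then show ?thesis
    using nn_integral_lborel_prod_prod[of "\<lambda>s. exp (- c * s\<^sup>2)" n]
      nn_integral_exp_neg_square[OF c] ennreal_power[of "sqrt (pi / c)" n] c
    by simp
qed

lemma nn_integral_lborel_PiM_scale:
  fixes c :: real
  assumes c: "c > 0" and "finite I" and "f \<in> borel_measurable (PiM I (\<lambda>_. lborel))"
  shows "(\<integral>\<^sup>+x. f x \<partial>PiM I (\<lambda>_. lborel))
      = ennreal (c ^ card I) * (\<integral>\<^sup>+x. f (\<lambda>i\<in>I. c * x i) \<partial>PiM I (\<lambda>_. lborel))"
  using assms(2,3)
proof (induction I arbitrary: f rule: finite_induct)
  case empty
  interpret product_sigma_finite "\<lambda>_. lborel :: real measure" by standard
  show ?case by (subst (1 2) nn_integral_empty) (auto simp: restrict_def)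
next
  case (insert i I)
  interpret product_sigma_finite "\<lambda>_. lborel :: real measure" by standard
  note [measurable] = insert.prems
  define h where "h x = (\<integral>\<^sup>+y. f (x(i := c * y)) \<partial>lborel)" for x
  have h_measurable: "h \<in> borel_measurable (PiM I (\<lambda>_. lborel))"
    unfolding h_def by measurable
  have "(\<integral>\<^sup>+x. f x \<partial>PiM (insert i I) (\<lambda>_. lborel))
      = (\<integral>\<^sup>+x. \<integral>\<^sup>+y. f (x(i := y)) \<partial>lborel \<partial>PiM I (\<lambda>_. lborel))"
    by (rule product_nn_integral_insert) (use insert in auto)
  also have "\<dots> = (\<integral>\<^sup>+x. ennreal c * h x \<partial>PiM I (\<lambda>_. lborel))"
  proof (rule nn_integral_cong)
    fix x assume x: "x \<in> space (PiM I (\<lambda>_. lborel :: real measure))"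
    have "(\<lambda>y. f (x(i := y))) \<in> borel_measurable borel"
      using measurable_comp[OF measurable_component_update insert.prems, OF x \<open>i \<notin> I\<close>]
      unfolding comp_def fun_upd_def measurable_lborel2 .
    from nn_integral_real_affine[OF this, of c 0] c
    show "(\<integral>\<^sup>+y. f (x(i := y)) \<partial>lborel) = ennreal c * h x"
      unfolding h_def by simp
  qed
  also have "\<dots> = ennreal c * (\<integral>\<^sup>+x. h x \<partial>PiM I (\<lambda>_. lborel))"
    by (rule nn_integral_cmult) (rule h_measurable)
  also have "(\<integral>\<^sup>+x. h x \<partial>PiM I (\<lambda>_. lborel))
      = ennreal (c ^ card I) * (\<integral>\<^sup>+x. h (\<lambda>j\<in>I. c * x j) \<partial>PiM I (\<lambda>_. lborel))"
    by (rule insert.IH) (rule h_measurable)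
  also have "(\<integral>\<^sup>+x. h (\<lambda>j\<in>I. c * x j) \<partial>PiM I (\<lambda>_. lborel))
      = (\<integral>\<^sup>+x. \<integral>\<^sup>+y. f (\<lambda>j\<in>insert i I. c * (x(i := y)) j) \<partial>lborel \<partial>PiM I (\<lambda>_. lborel))"
  proof -
    have "(\<lambda>j\<in>I. c * x j)(i := c * y) = (\<lambda>j\<in>insert i I. c * (x(i := y)) j)" for x y
      using insert by (auto simp: fun_eq_iff)
    then show ?thesis unfolding h_def by (intro nn_integral_cong) presburger
  qed
  also have "\<dots> = (\<integral>\<^sup>+x. f (\<lambda>j\<in>insert i I. c * x j) \<partial>PiM (insert i I) (\<lambda>_. lborel))"
    by (rule product_nn_integral_insert[symmetric]) (use insert in auto)
  finally have "(\<integral>\<^sup>+x. f x \<partial>PiM (insert i I) (\<lambda>_. lborel)) = ennreal c * (ennreal (c ^ card I)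
      * (\<integral>\<^sup>+x. f (\<lambda>j\<in>insert i I. c * x j) \<partial>PiM (insert i I) (\<lambda>_. lborel)))" .
  moreover have "ennreal (c ^ card (insert i I)) = ennreal c * ennreal (c ^ card I)"
    using insert c by (simp add: ennreal_mult)
  ultimately show ?case by (simp only: mult.assoc)
qed

lemma nn_integral_exp_neg_tail:
  fixes k b :: real
  assumes k: "k > 0"
  shows "(\<integral>\<^sup>+s. ennreal (exp (- k * s)) * indicator {b..} s \<partial>lborel) = ennreal (exp (- k * b) / k)"
proof -
  have "(\<integral>\<^sup>+s. ennreal (exp (- k * s)) * indicator {b..} s \<partial>lborel)
      = (\<integral>\<^sup>+s. indicator {b..} s * exp (- k * s) \<partial>lborel)"
    by (intro nn_integral_cong) (auto split: split_indicator)
  also have "\<dots> = ennreal (exp (- k * b) / k)"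
    by (rule nn_integral_has_integral_lebesgue)
      (use has_integral_exp_minus_to_infinity[OF k, of b] in auto)
  finally show ?thesis .
qed

subsection \<open>The Huber function\<close>

definition huber :: "real \<Rightarrow> real \<Rightarrow> real" where
  "huber m s = (if \<bar>s\<bar> \<le> m / 2 then s\<^sup>2 else m * \<bar>s\<bar> - m\<^sup>2 / 4)"

lemma huber_measurable [measurable]: "huber m \<in> borel_measurable borel"
  unfolding huber_def by measurable

text \<open>The infimal convolution of \<open>m \<bar>\<cdot>\<bar>\<close> and \<open>(\<cdot>)\<^sup>2\<close>: this is what makes the Huber
  function small on the Minkowski sum of an \<open>\<ell>\<^sub>1\<close>-ball and a Euclidean ball.\<close>

lemma huber_add_le:
  assumes m: "m > 0"
  shows "huber m (y + z) \<le> m * \<bar>y\<bar> + z\<^sup>2"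
proof (cases "\<bar>y + z\<bar> \<le> m / 2")
  case True
  have "(y + z)\<^sup>2 - z\<^sup>2 = 2 * (y * (y + z)) - y\<^sup>2"
    by (simp add: power2_eq_square algebra_simps)
  also have "\<dots> \<le> 2 * (\<bar>y\<bar> * \<bar>y + z\<bar>)"
    using abs_ge_self[of "y * (y + z)"] zero_le_power2[of y] unfolding abs_mult by linarith
  also have "\<dots> \<le> 2 * (\<bar>y\<bar> * (m / 2))"
    using True by (intro mult_left_mono) auto
  finally show ?thesis using True by (simp add: huber_def mult.commute)
next
  case False
  have "m * \<bar>y + z\<bar> \<le> m * \<bar>y\<bar> + m * \<bar>z\<bar>"
    using m by (metis abs_triangle_ineq distrib_left mult_left_mono less_imp_le)
  moreover have "m * \<bar>z\<bar> - m\<^sup>2 / 4 \<le> z\<^sup>2"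
    using zero_le_power2[of "\<bar>z\<bar> - m / 2"] by (simp add: power2_eq_square algebra_simps)
  ultimately show ?thesis using False by (simp add: huber_def)
qed

lemma nn_integral_exp_neg_huber_le:
  fixes l m :: real
  assumes l: "l > 0" and m: "m > 0"
  shows "(\<integral>\<^sup>+s. ennreal (exp (- l * huber m s)) \<partial>lborel) \<le> ennreal (sqrt (pi / l) + 2 / (l * m))"
proof -
  define F where "F s = ennreal (exp (l * m\<^sup>2 / 4 - l * m * s)) * indicator {m / 2..} s" for s
  have [measurable]: "F \<in> borel_measurable borel" unfolding F_def by measurable
  have pointwise: "ennreal (exp (- l * huber m s)) \<le> ennreal (exp (- l * s\<^sup>2)) + F s + F (0 + (-1) * s)"
    for s
  proof -
    consider "\<bar>s\<bar> \<le> m / 2" | "s > m / 2" | "s < - m / 2" by linarith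
    then show ?thesis
    proof cases
      case 1
      then show ?thesis by (simp add: huber_def)
    next
      case 2
      then have "\<not> \<bar>s\<bar> \<le> m / 2" "\<bar>s\<bar> = s" using m by auto
      with 2 have "F s = ennreal (exp (- l * huber m s))"
        by (simp add: F_def huber_def algebra_simps)
      then show ?thesis by (simp add: add.commute add_increasing2)
    next
      case 3
      then have "\<not> \<bar>s\<bar> \<le> m / 2" "\<bar>s\<bar> = - s" using m by auto
      with 3 have "F (0 + (-1) * s) = ennreal (exp (- l * huber m s))"
        by (simp add: F_def huber_def algebra_simps)
      then show ?thesis by (simp add: add_increasing)
    qed
  qed
  have tail: "(\<integral>\<^sup>+s. F s \<partial>lborel) \<le> ennreal (1 / (l * m))"
  proof -
    have "(\<integral>\<^sup>+s. F s \<partial>lborel)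
        = (\<integral>\<^sup>+s. ennreal (exp (l * m\<^sup>2 / 4)) * (ennreal (exp (- (l * m) * s)) * indicator {m / 2..} s) \<partial>lborel)"
    proof -
      have "exp (l * m\<^sup>2 / 4 - l * m * s) = exp (l * m\<^sup>2 / 4) * exp (- (l * m) * s)" for s
        by (metis diff_conv_add_uminus exp_add minus_mult_left)
      then show ?thesis
        unfolding F_def by (intro nn_integral_cong) (simp add: ennreal_mult mult.assoc)
    qed
    also have "\<dots> = ennreal (exp (l * m\<^sup>2 / 4)) * ennreal (exp (- (l * m) * (m / 2)) / (l * m))"
      using nn_integral_exp_neg_tail[of "l * m" "m / 2"] l m by (subst nn_integral_cmult) auto
    also have "\<dots> = ennreal (exp (- (l * m\<^sup>2 / 4)) / (l * m))"
    proof -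
      have "l * m\<^sup>2 / 4 + - (l * m) * (m / 2) = - (l * m\<^sup>2 / 4)"
        by (simp add: power2_eq_square field_simps)
      then show ?thesis
        using l m by (simp add: ennreal_mult[symmetric] exp_add[symmetric] del: exp_add)
    qed
    also have "\<dots> \<le> ennreal (1 / (l * m))"
      using l m by (intro ennreal_leI divide_right_mono) auto
    finally show ?thesis .
  qed
  have reflected_tail: "(\<integral>\<^sup>+s. F (0 + (-1) * s) \<partial>lborel) = (\<integral>\<^sup>+s. F s \<partial>lborel)"
    using nn_integral_real_affine[of F "-1" 0] by simp
  have "(\<integral>\<^sup>+s. ennreal (exp (- l * huber m s)) \<partial>lborel)
      \<le> (\<integral>\<^sup>+s. ennreal (exp (- l * s\<^sup>2)) + F s + F (0 + (-1) * s) \<partial>lborel)"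
    by (intro nn_integral_mono pointwise)
  also have "\<dots> = (\<integral>\<^sup>+s. ennreal (exp (- l * s\<^sup>2)) \<partial>lborel) + (\<integral>\<^sup>+s. F s \<partial>lborel)
      + (\<integral>\<^sup>+s. F (0 + (-1) * s) \<partial>lborel)"
    by (subst nn_integral_add; simp)+
  also have "\<dots> \<le> ennreal (sqrt (pi / l)) + ennreal (1 / (l * m)) + ennreal (1 / (l * m))"
    using nn_integral_exp_neg_square[OF l] tail reflected_tail by (intro add_mono) auto
  also have "\<dots> = ennreal (sqrt (pi / l) + 2 / (l * m))"
    using l m by (simp add: ennreal_plus[symmetric] del: ennreal_plus)
  finally show ?thesis .
qed

definition sqnorm_ball :: "nat \<Rightarrow> real \<Rightarrow> (nat \<Rightarrow> real) set" where
  "sqnorm_ball n R = {x \<in> Rn n. sqnorm n x \<le> R}"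

lemma space_lborel_prod: "space (lborel_prod n) = Rn n"
  by (simp add: space_PiM Rn_def)

lemma sqnorm_ball_sets [measurable]: "sqnorm_ball n R \<in> sets (lborel_prod n)"
  unfolding sqnorm_ball_def space_lborel_prod[symmetric] by measurable

lemma vscale_lpball2_eq:
  assumes r: "r > 0"
  shows "vscale n r (lpball2 n) = sqnorm_ball n (r\<^sup>2)"
proof (intro set_eqI iffI)
  fix x assume "x \<in> vscale n r (lpball2 n)"
  then obtain y where y: "y \<in> lpball2 n" and x: "x = (\<lambda>i\<in>{..<n}. r * y i)"
    unfolding vscale_def by auto
  have "sqnorm n y \<le> 1" using y by (simp add: lpball2_def sqnorm_def)
  moreover have "sqnorm n x = r\<^sup>2 * sqnorm n y"
    unfolding x by (rule sqnorm_restrict_scale)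
  ultimately show "x \<in> sqnorm_ball n (r\<^sup>2)"
    unfolding sqnorm_ball_def by (simp add: x Rn_def mult_left_le)
next
  fix x assume x: "x \<in> sqnorm_ball n (r\<^sup>2)"
  define y where "y = (\<lambda>i\<in>{..<n}. x i / r)"
  have "sqnorm n y = sqnorm n x / r\<^sup>2"
    unfolding y_def sqnorm_def by (simp add: power_divide sum_divide_distrib)
  then have "y \<in> lpball2 n"
    using x r unfolding lpball2_def Rn_def y_def sqnorm_ball_def by (simp add: sqnorm_def)
  moreover have "x = (\<lambda>i\<in>{..<n}. r * y i)"
    using x r unfolding y_def sqnorm_ball_def Rn_def by (auto simp: PiE_def extensional_def fun_eq_iff)
  ultimately show "x \<in> vscale n r (lpball2 n)" unfolding vscale_def by blast
qed

lemma emeasure_sublevel_le_nn_integral_exp: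
  assumes [measurable]: "f \<in> borel_measurable M" and l: "l \<ge> 0"
  shows "emeasure M {x \<in> space M. f x \<le> C} \<le> (\<integral>\<^sup>+x. ennreal (exp (l * (C - f x))) \<partial>M)"
proof -
  have "emeasure M {x \<in> space M. f x \<le> C} = (\<integral>\<^sup>+x. indicator {x \<in> space M. f x \<le> C} x \<partial>M)"
    by simp
  also have "\<dots> \<le> (\<integral>\<^sup>+x. ennreal (exp (l * (C - f x))) \<partial>M)"
    using l by (intro nn_integral_mono) (auto split: split_indicator)
  finally show ?thesis .
qed

lemma sqnorm_ball_fmeasurable: "sqnorm_ball n R \<in> fmeasurable (lborel_prod n)"
proof (rule fmeasurableI)
  have "emeasure (lborel_prod n) (sqnorm_ball n R)
      \<le> (\<integral>\<^sup>+x. ennreal (exp (1 * (R - sqnorm n x))) \<partial>lborel_prod n)"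
    using emeasure_sublevel_le_nn_integral_exp[of "sqnorm n" "lborel_prod n" 1 R]
    by (simp add: sqnorm_ball_def space_lborel_prod)
  also have "\<dots> = (\<integral>\<^sup>+x. ennreal (exp R) * ennreal (exp (- 1 * sqnorm n x)) \<partial>lborel_prod n)"
    by (intro nn_integral_cong) (simp add: ennreal_mult[symmetric] exp_diff exp_minus field_simps)
  also have "\<dots> = ennreal (exp R) * ennreal (sqrt (pi / 1) ^ n)"
    using nn_integral_exp_neg_sqnorm[of 1 n] by (subst nn_integral_cmult) auto
  also have "\<dots> < \<infinity>" by (simp add: ennreal_mult_less_top)
  finally show "emeasure (lborel_prod n) (sqnorm_ball n R) < \<infinity>" .
qed simp

lemma measure_le_fmeasurable:
  assumes "K \<subseteq> S" "S \<in> fmeasurable M"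
  shows "measure M K \<le> measure M S"
proof (cases "K \<in> sets M")
  case True
  then show ?thesis by (rule measure_mono_fmeasurable[OF assms(1) _ assms(2)])
next
  case False
  then show ?thesis by (simp add: measure_notin_sets)
qed

lemma measure_sqnorm_ball_scale:
  assumes R: "R > 0"
  shows "measure (lborel_prod n) (sqnorm_ball n (R\<^sup>2)) = R ^ n * measure (lborel_prod n) (sqnorm_ball n 1)"
proof -
  let ?M = "lborel_prod n"
  have "emeasure ?M (sqnorm_ball n (R\<^sup>2)) = (\<integral>\<^sup>+x. indicator (sqnorm_ball n (R\<^sup>2)) x \<partial>?M)"
    by simp
  also have "\<dots> = ennreal (R ^ n) * (\<integral>\<^sup>+x. indicator (sqnorm_ball n (R\<^sup>2)) (\<lambda>i\<in>{..<n}. R * x i) \<partial>?M)"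
    using nn_integral_lborel_PiM_scale[OF R, of "{..<n}" "indicator (sqnorm_ball n (R\<^sup>2))"] by simp
  also have "(\<integral>\<^sup>+x. indicator (sqnorm_ball n (R\<^sup>2)) (\<lambda>i\<in>{..<n}. R * x i) \<partial>?M)
      = (\<integral>\<^sup>+x. indicator (sqnorm_ball n 1) x \<partial>?M)"
    using R by (intro nn_integral_cong)
      (auto simp: space_lborel_prod sqnorm_ball_def sqnorm_restrict_scale Rn_def indicator_def)
  also have "\<dots> = emeasure ?M (sqnorm_ball n 1)" by simp
  finally have "emeasure ?M (sqnorm_ball n (R\<^sup>2)) = ennreal (R ^ n) * measure ?M (sqnorm_ball n 1)"
    using sqnorm_ball_fmeasurable[of n 1] by (simp add: emeasure_eq_measure2)
  then show ?thesis
    using R by (intro measure_eq_emeasure_eq_ennreal) (simp_all add: ennreal_mult)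
qed

subsection \<open>The Minkowski sum of the \<open>\<ell>\<^sub>1\<close>-ball and a Euclidean ball\<close>

lemma msum_lpball1_lpball2E:
  assumes t: "t > 0" and x: "x \<in> msum n (lpball1 n) (vscale n t (lpball2 n))"
  obtains y z where "x \<in> Rn n" "\<And>i. i < n \<Longrightarrow> x i = y i + z i"
    "(\<Sum>i<n. \<bar>y i\<bar>) \<le> 1" "sqnorm n z \<le> t\<^sup>2"
proof -
  obtain y z where x_eq: "x = (\<lambda>i\<in>{..<n}. y i + z i)" and y: "y \<in> lpball1 n"
    and z: "z \<in> vscale n t (lpball2 n)"
    using x unfolding msum_def by blast
  show thesis
  proof
    show "x \<in> Rn n" by (simp add: x_eq Rn_def)
    show "(\<Sum>i<n. \<bar>y i\<bar>) \<le> 1" using y by (simp add: lpball1_def)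
    show "sqnorm n z \<le> t\<^sup>2" using z by (simp add: vscale_lpball2_eq[OF t] sqnorm_ball_def)
  qed (simp add: x_eq)
qed

lemma msum_lpball1_lpball2_subset_huber:
  assumes t: "t > 0" and m: "m > 0"
  shows "msum n (lpball1 n) (vscale n t (lpball2 n)) \<subseteq> {x \<in> Rn n. (\<Sum>i<n. huber m (x i)) \<le> m + t\<^sup>2}"
proof
  fix x assume "x \<in> msum n (lpball1 n) (vscale n t (lpball2 n))"
  then obtain y z where x: "x \<in> Rn n" "\<And>i. i < n \<Longrightarrow> x i = y i + z i"
    and y: "(\<Sum>i<n. \<bar>y i\<bar>) \<le> 1" and z: "sqnorm n z \<le> t\<^sup>2"
    using msum_lpball1_lpball2E[OF t] by metis
  have "(\<Sum>i<n. huber m (x i)) \<le> (\<Sum>i<n. m * \<bar>y i\<bar> + (z i)\<^sup>2)"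
    using x(2) huber_add_le[OF m] by (intro sum_mono) auto
  also have "\<dots> = m * (\<Sum>i<n. \<bar>y i\<bar>) + sqnorm n z"
    by (simp add: sqnorm_def sum.distrib sum_distrib_left)
  also have "\<dots> \<le> m + t\<^sup>2"
    using y z m mult_left_le[of "\<Sum>i<n. \<bar>y i\<bar>" m] by linarith
  finally show "x \<in> {x \<in> Rn n. (\<Sum>i<n. huber m (x i)) \<le> m + t\<^sup>2}" using x(1) by blast
qed

lemma msum_lpball1_lpball2_subset_ball:
  assumes t: "t > 0"
  shows "msum n (lpball1 n) (vscale n t (lpball2 n)) \<subseteq> sqnorm_ball n ((1 + t)\<^sup>2)"
proof
  fix x assume "x \<in> msum n (lpball1 n) (vscale n t (lpball2 n))"
  then obtain y z where x: "x \<in> Rn n" "\<And>i. i < n \<Longrightarrow> x i = y i + z i"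
    and y: "(\<Sum>i<n. \<bar>y i\<bar>) \<le> 1" and z: "sqnorm n z \<le> t\<^sup>2"
    using msum_lpball1_lpball2E[OF t] by metis
  have sqnorm_L2: "sqnorm n w = (L2_set w {..<n})\<^sup>2" for w
    by (simp add: sqnorm_def L2_set_def sum_nonneg)
  have "L2_set x {..<n} = L2_set (\<lambda>i. y i + z i) {..<n}"
    using x(2) by (intro L2_set_cong) auto
  also have "\<dots> \<le> L2_set y {..<n} + L2_set z {..<n}"
    by (rule L2_set_triangle_ineq)
  also have "\<dots> \<le> 1 + t"
  proof (intro add_mono)
    show "L2_set y {..<n} \<le> 1" using L2_set_le_sum_abs[of y "{..<n}"] y by linarith
    show "L2_set z {..<n} \<le> t"
      using z t unfolding sqnorm_L2 by (simp add: power2_le_iff_abs_le)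
  qed
  finally show "x \<in> sqnorm_ball n ((1 + t)\<^sup>2)"
    using x(1) unfolding sqnorm_ball_def sqnorm_L2 by (simp add: power_mono)
qed

lemma vol_msum_div_vol_le:
  assumes t: "t > 0"
  shows "vol n (msum n (lpball1 n) (vscale n t (lpball2 n))) / vol n (vscale n t (lpball2 n))
    \<le> ((1 + t) / t) ^ n"
proof -
  define m1 where "m1 = measure (lborel_prod n) (sqnorm_ball n 1)"
  have K: "vol n (msum n (lpball1 n) (vscale n t (lpball2 n))) \<le> (1 + t) ^ n * m1"
    using measure_le_fmeasurable[OF msum_lpball1_lpball2_subset_ball[OF t, of n] sqnorm_ball_fmeasurable]
      measure_sqnorm_ball_scale[of "1 + t" n] t
    by (simp add: vol_def m1_def)
  have B: "vol n (vscale n t (lpball2 n)) = t ^ n * m1"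
    using measure_sqnorm_ball_scale[OF t, of n] by (simp add: vol_def vscale_lpball2_eq[OF t] m1_def)
  show ?thesis
  proof (cases "m1 = 0")
    case True
    then show ?thesis using B t by simp
  next
    case False
    then have "vol n (msum n (lpball1 n) (vscale n t (lpball2 n))) / vol n (vscale n t (lpball2 n))
        \<le> (1 + t) ^ n * m1 / (t ^ n * m1)"
      unfolding B using K t by (intro divide_right_mono) (auto simp: m1_def)
    also have "\<dots> = ((1 + t) / t) ^ n"
      using False by (simp add: power_divide)
    finally show ?thesis .
  qed
qed

lemma vol_msum_lpball1_lpball2_le:
  assumes l: "l > 0" and m: "m > 0" and t: "t > 0"
  shows "vol n (msum n (lpball1 n) (vscale n t (lpball2 n)))
    \<le> exp (l * (m + t\<^sup>2)) * (sqrt (pi / l) + 2 / (l * m)) ^ n"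
proof -
  let ?M = "lborel_prod n"
  define C where "C = m + t\<^sup>2"
  define B where "B = sqrt (pi / l) + 2 / (l * m)"
  have B: "B \<ge> 0" using l m by (simp add: B_def)
  let ?S = "{x \<in> space ?M. (\<Sum>i<n. huber m (x i)) \<le> C}"
  have "emeasure ?M ?S \<le> (\<integral>\<^sup>+x. ennreal (exp (l * (C - (\<Sum>i<n. huber m (x i))))) \<partial>?M)"
    using l by (intro emeasure_sublevel_le_nn_integral_exp) auto
  also have "\<dots> = (\<integral>\<^sup>+x. ennreal (exp (l * C)) * ennreal (\<Prod>i<n. exp (- l * huber m (x i))) \<partial>?M)"
  proof (intro nn_integral_cong)
    fix x
    have "exp (l * (C - (\<Sum>i<n. huber m (x i)))) = exp (l * C) * exp (\<Sum>i<n. - l * huber m (x i))"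
      by (simp add: exp_add[symmetric] right_diff_distrib sum_distrib_left sum_negf)
    then show "ennreal (exp (l * (C - (\<Sum>i<n. huber m (x i)))))
        = ennreal (exp (l * C)) * ennreal (\<Prod>i<n. exp (- l * huber m (x i)))"
      by (simp add: exp_sum ennreal_mult[symmetric] prod_nonneg)
  qed
  also have "\<dots> = ennreal (exp (l * C)) * (\<integral>\<^sup>+s. ennreal (exp (- l * huber m s)) \<partial>lborel) ^ n"
    using nn_integral_lborel_prod_prod[of "\<lambda>s. exp (- l * huber m s)" n]
    by (subst nn_integral_cmult) auto
  also have "\<dots> \<le> ennreal (exp (l * C)) * ennreal B ^ n"
    unfolding B_def by (intro mult_left_mono power_mono nn_integral_exp_neg_huber_le l m) auto
  also have "\<dots> = ennreal (exp (l * C) * B ^ n)"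
    using B by (simp add: ennreal_power ennreal_mult)
  finally have S: "emeasure ?M ?S \<le> ennreal (exp (l * C) * B ^ n)" .
  have "?S \<in> fmeasurable ?M"
    using S by (intro fmeasurableI) (auto intro: le_less_trans)
  moreover have "msum n (lpball1 n) (vscale n t (lpball2 n)) \<subseteq> ?S"
    using msum_lpball1_lpball2_subset_huber[OF t m] by (simp add: space_lborel_prod C_def)
  ultimately have "vol n (msum n (lpball1 n) (vscale n t (lpball2 n))) \<le> measure ?M ?S"
    unfolding vol_def by (intro measure_le_fmeasurable)
  also have "\<dots> \<le> exp (l * C) * B ^ n"
    unfolding measure_def using S B by (intro enn2real_leI) auto
  finally show ?thesis by (simp add: C_def B_def)
qed

lemma gaussian_mass_le_ball_plus_tails:
  assumes l: "l > 0" and th: "0 < th" "th < l" and R: "R1 \<le> R2"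
  shows "sqrt (pi / l) ^ n \<le> exp (- l * R1) * measure (lborel_prod n) (sqnorm_ball n R2)
     + exp (th * R1) * sqrt (pi / (l + th)) ^ n + exp (- th * R2) * sqrt (pi / (l - th)) ^ n"
proof -
  let ?M = "lborel_prod n"
  let ?B = "sqnorm_ball n R2"
  let ?f = "\<lambda>x. ennreal (exp (- l * R1)) * indicator ?B x
        + ennreal (exp (th * R1)) * ennreal (exp (- (l + th) * sqnorm n x))
        + ennreal (exp (- th * R2)) * ennreal (exp (- (l - th) * sqnorm n x))"
  have "ennreal (sqrt (pi / l) ^ n) = (\<integral>\<^sup>+x. ennreal (exp (- l * sqnorm n x)) \<partial>?M)"
    using nn_integral_exp_neg_sqnorm[OF l] by simp
  also have "\<dots> \<le> (\<integral>\<^sup>+x. ?f x \<partial>?M)"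
  proof (rule nn_integral_mono)
    fix x assume x: "x \<in> space ?M"
    consider "sqnorm n x < R1" | "R1 \<le> sqnorm n x" "sqnorm n x \<le> R2" | "R2 < sqnorm n x"
      by linarith
    then show "ennreal (exp (- l * sqnorm n x)) \<le> ?f x"
    proof cases
      case 1
      then have "exp (- l * sqnorm n x) \<le> exp (th * R1) * exp (- (l + th) * sqnorm n x)"
        using th unfolding exp_add[symmetric] by (simp add: algebra_simps)
      then show ?thesis
        by (intro add_increasing2[OF zero_le] add_increasing[OF zero_le]) (simp add: ennreal_mult[symmetric])
    next
      case 2
      then have "exp (- l * sqnorm n x) \<le> exp (- l * R1)" using l by simp
      then show ?thesis
        using 2 x by (intro add_increasing2[OF zero_le])
          (simp add: indicator_def sqnorm_ball_def space_lborel_prod)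
    next
      case 3
      then have "exp (- l * sqnorm n x) \<le> exp (- th * R2) * exp (- (l - th) * sqnorm n x)"
        using th unfolding exp_add[symmetric] by (simp add: algebra_simps)
      then show ?thesis
        by (intro add_increasing[OF zero_le]) (simp add: ennreal_mult[symmetric])
    qed
  qed
  also have "\<dots> = ennreal (exp (- l * R1)) * emeasure ?M ?B
      + ennreal (exp (th * R1)) * (\<integral>\<^sup>+x. ennreal (exp (- (l + th) * sqnorm n x)) \<partial>?M)
      + ennreal (exp (- th * R2)) * (\<integral>\<^sup>+x. ennreal (exp (- (l - th) * sqnorm n x)) \<partial>?M)"
    by (simp add: nn_integral_add nn_integral_cmult)
  also have "\<dots> = ennreal (exp (- l * R1)) * emeasure ?M ?B
      + ennreal (exp (th * R1)) * ennreal (sqrt (pi / (l + th)) ^ n)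
      + ennreal (exp (- th * R2)) * ennreal (sqrt (pi / (l - th)) ^ n)"
    using l th by (simp only: nn_integral_exp_neg_sqnorm add_pos_pos diff_gt_0_iff_gt)
  also have "\<dots> = ennreal (exp (- l * R1) * measure ?M ?B + exp (th * R1) * sqrt (pi / (l + th)) ^ n
      + exp (- th * R2) * sqrt (pi / (l - th)) ^ n)"
    using sqnorm_ball_fmeasurable[of n R2] l th
    by (simp add: emeasure_eq_measure2 ennreal_mult ennreal_plus)
  finally show ?thesis
    using l th by (subst (asm) ennreal_le_iff) (auto intro!: add_nonneg_nonneg)
qed

subsection \<open>Concentration of the Gaussian measure\<close>

lemma exp_half_div_sqrt_less_one:
  assumes x: "x < ln c" and c: "c > 0"
  shows "exp (x / 2) / sqrt c < 1"
proof -
  have "exp (x / 2) = sqrt (exp x)"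
    by (rule real_sqrt_unique[symmetric]) (simp_all add: power2_eq_square exp_add[symmetric])
  also have "\<dots> < sqrt c"
    using exp_less_mono[OF x] c by simp
  finally show ?thesis using c by simp
qed

text \<open>Most of the mass of the Gaussian density \<open>exp (- l * sqnorm n x)\<close> lies in the shell
  where \<open>sqnorm n x\<close> is close to its mean \<open>n / (2 * l)\<close>; an exponential moment bound on
  each side of the shell shows that the two tails together carry at most half of the mass.\<close>

lemma measure_sqnorm_ball_ge_gaussian:
  fixes e :: real
  assumes e: "0 < e" "e \<le> 1 / 2"
  obtains N where "\<And>n l. N \<le> n \<Longrightarrow> l > 0 \<Longrightarrow>
    exp ((1 - e) * n / 2) * sqrt (pi / l) ^ n / 2
      \<le> measure (lborel_prod n) (sqnorm_ball n ((1 + e) * n / (2 * l)))"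
proof -
  define s where "s = e / 4"
  have s: "0 < s" "s \<le> 1 / 8" "s < e" "2 * s < e" using e by (auto simp: s_def)
  define p1 where "p1 = exp (s * (1 - e) / 2) / sqrt (1 + s)"
  define p2 where "p2 = exp (- (s * (1 + e)) / 2) / sqrt (1 - s)"
  have "s * (1 - e) < s - s\<^sup>2"
    using mult_strict_left_mono[OF s(3) s(1)] by (simp add: power2_eq_square algebra_simps)
  also have "\<dots> \<le> ln (1 + s)"
    using s by (intro ln_one_plus_pos_lower_bound) auto
  finally have p1: "p1 < 1"
    unfolding p1_def by (rule exp_half_div_sqrt_less_one) (use s in auto)
  have "- (s * (1 + e)) < - s - 2 * s\<^sup>2"
    using mult_strict_left_mono[OF s(4) s(1)] by (simp add: power2_eq_square algebra_simps)
  also have "\<dots> \<le> ln (1 - s)"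
    using s by (intro ln_one_minus_pos_lower_bound) auto
  finally have p2: "p2 < 1"
    unfolding p2_def by (rule exp_half_div_sqrt_less_one) (use s in auto)
  have p_pos: "0 < p1" "0 < p2" using s by (simp_all add: p1_def p2_def)
  obtain N1 where N1: "p1 ^ N1 < 1 / 4"
    using real_arch_pow_inv[of "1 / 4" p1] p1 p_pos by auto
  obtain N2 where N2: "p2 ^ N2 < 1 / 4"
    using real_arch_pow_inv[of "1 / 4" p2] p2 p_pos by auto
  show thesis
  proof (rule that[of "max N1 N2"])
    fix n :: nat and l :: real
    assume n: "max N1 N2 \<le> n" and l: "l > 0"
    define G where "G = sqrt (pi / l)"
    define R1 where "R1 = (1 - e) * n / (2 * l)"
    define R2 where "R2 = (1 + e) * n / (2 * l)"
    let ?vol = "measure (lborel_prod n) (sqnorm_ball n R2)"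
    have factor: "exp (real n * x) * sqrt (pi / (l * c)) ^ n = G ^ n * (exp x / sqrt c) ^ n"
      if "c > 0" for x c
      using l that
      by (simp add: G_def exp_of_nat_mult real_sqrt_divide real_sqrt_mult power_divide
          power_mult_distrib)
    have R1: "s * l * R1 = real n * (s * (1 - e) / 2)" "l + s * l = l * (1 + s)"
      using l by (simp_all add: R1_def field_simps)
    have R2: "- (s * l) * R2 = real n * (- (s * (1 + e)) / 2)" "l - s * l = l * (1 - s)"
      using l by (simp_all add: R2_def field_simps)
    have "exp (s * l * R1) * sqrt (pi / (l + s * l)) ^ n = G ^ n * p1 ^ n"
      unfolding R1 p1_def using s by (intro factor) simp
    moreover have "exp (- (s * l) * R2) * sqrt (pi / (l - s * l)) ^ n = G ^ n * p2 ^ n"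
      unfolding R2 p2_def using s by (intro factor) simp
    moreover have "R1 \<le> R2"
      unfolding R1_def R2_def using e l by (intro divide_right_mono mult_right_mono) auto
    ultimately have "G ^ n \<le> exp (- l * R1) * ?vol + G ^ n * p1 ^ n + G ^ n * p2 ^ n"
      using gaussian_mass_le_ball_plus_tails[OF l, of "s * l" R1 R2 n] s l
      by (simp add: G_def)
    moreover have "- l * R1 = - ((1 - e) * n / 2)" using l by (simp add: R1_def)
    ultimately have mass: "G ^ n \<le> exp (- ((1 - e) * n / 2)) * ?vol + G ^ n * p1 ^ n + G ^ n * p2 ^ n"
      by (simp only:)
    have "p1 ^ n \<le> p1 ^ N1" "p2 ^ n \<le> p2 ^ N2"
      using n p1 p2 p_pos by (auto intro!: power_decreasing)
    with N1 N2 have "p1 ^ n \<le> 1 / 4" "p2 ^ n \<le> 1 / 4" by linarith+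
    then have "G ^ n * p1 ^ n \<le> G ^ n * (1 / 4)" "G ^ n * p2 ^ n \<le> G ^ n * (1 / 4)"
      using l by (simp_all add: G_def mult_left_mono)
    with mass have "G ^ n / 2 \<le> exp (- ((1 - e) * n / 2)) * ?vol" by linarith
    then have "exp ((1 - e) * n / 2) * (G ^ n / 2)
        \<le> exp ((1 - e) * n / 2) * (exp (- ((1 - e) * n / 2)) * ?vol)"
      by (intro mult_left_mono) auto
    also have "\<dots> = ?vol" by (simp add: exp_minus)
    finally show "exp ((1 - e) * n / 2) * sqrt (pi / l) ^ n / 2 \<le> ?vol"
      by (simp add: G_def R2_def)
  qed
qed

lemma vol_msum_lpball1_lpball2_le_gaussian:
  assumes e: "e > 0" and l: "l > 0" and t: "t > 0"
    and radius: "t\<^sup>2 = (1 + e) * n / (2 * l)"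
    and small: "2 / (e * n) \<le> e * sqrt (pi / l)"
  shows "vol n (msum n (lpball1 n) (vscale n t (lpball2 n)))
    \<le> exp ((1 - e) * n / 2 + 3 * e * n) * sqrt (pi / l) ^ n"
proof -
  define G where "G = sqrt (pi / l)"
  define m where "m = e * n / l"
  have "n > 0" using radius t e l by (intro Nat.gr0I) simp
  then have m: "m > 0" and lm: "l * m = e * n" using e l by (simp_all add: m_def)
  have "G + 2 / (l * m) \<le> G * exp e"
  proof -
    have "G + 2 / (l * m) \<le> G * (1 + e)"
      using small by (simp add: lm G_def algebra_simps)
    also have "\<dots> \<le> G * exp e"
      using l by (intro mult_left_mono) (auto simp: G_def)
    finally show ?thesis .
  qed
  then have "(G + 2 / (l * m)) ^ n \<le> (G * exp e) ^ n"
    using l m by (intro power_mono) (simp_all add: G_def)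
  also have "\<dots> = G ^ n * exp (e * n)"
    by (simp add: power_mult_distrib exp_of_nat_mult[symmetric] mult.commute)
  finally have power: "(G + 2 / (l * m)) ^ n \<le> G ^ n * exp (e * n)" .
  have sum: "l * (m + t\<^sup>2) + e * n = (1 - e) * n / 2 + 3 * e * n"
    using l by (simp add: radius lm distrib_left field_simps)
  have exponent: "exp (l * (m + t\<^sup>2)) * (G ^ n * exp (e * n))
      = exp ((1 - e) * n / 2 + 3 * e * n) * G ^ n"
    unfolding sum[symmetric] exp_add by (simp only: mult_ac)
  have "vol n (msum n (lpball1 n) (vscale n t (lpball2 n)))
      \<le> exp (l * (m + t\<^sup>2)) * (G + 2 / (l * m)) ^ n"
    unfolding G_def by (rule vol_msum_lpball1_lpball2_le[OF l m t])
  also have "\<dots> \<le> exp (l * (m + t\<^sup>2)) * (G ^ n * exp (e * n))"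
    using power by (intro mult_left_mono) auto
  finally show ?thesis unfolding exponent by (simp only: G_def)
qed

definition inflation_ratio :: "nat \<Rightarrow> real \<Rightarrow> real" where
  "inflation_ratio n a = vol n (msum n (lpball1 n) (vscale n (a / sqrt n) (lpball2 n)))
    / vol n (vscale n (a / sqrt n) (lpball2 n))"

lemma inflation_ratio_le_exp:
  fixes e :: real
  assumes e: "0 < e" "e \<le> 1 / 2"
  obtains N where "\<And>n a. N \<le> n \<Longrightarrow> 2 / e\<^sup>2 \<le> a \<Longrightarrow> inflation_ratio n a \<le> exp (4 * e * n)"
proof -
  obtain N0 where N0: "\<And>n l. N0 \<le> n \<Longrightarrow> l > 0 \<Longrightarrow>
      exp ((1 - e) * n / 2) * sqrt (pi / l) ^ n / 2
        \<le> measure (lborel_prod n) (sqnorm_ball n ((1 + e) * n / (2 * l)))"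
    using measure_sqnorm_ball_ge_gaussian[OF e] by blast
  show thesis
  proof (rule that[of "max N0 (nat \<lceil>ln 2 / e\<rceil>)"])
    fix n :: nat and a :: real
    assume n: "max N0 (nat \<lceil>ln 2 / e\<rceil>) \<le> n" and a: "2 / e\<^sup>2 \<le> a"
    have "ln 2 / e \<le> n"
      using n by linarith
    then have ln2: "ln 2 \<le> e * n"
      using e by (simp add: pos_divide_le_eq mult.commute)
    then have two: "2 \<le> exp (e * n)"
      by (metis exp_le_cancel_iff exp_ln zero_less_numeral)
    have "e * n > 0" using ln2 ln_gt_zero[of 2] by linarith
    then have n_pos: "n > 0" using e by (simp add: zero_less_mult_iff)
    have "0 < 2 / e\<^sup>2" using e by simp
    with a have a_pos: "a > 0" by linarith
    define t where "t = a / sqrt n"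
    define l where "l = (1 + e) * n / (2 * t\<^sup>2)"
    define G where "G = sqrt (pi / l)"
    have t: "t > 0" and l: "l > 0" using a_pos n_pos e by (simp_all add: t_def l_def)
    have radius: "t\<^sup>2 = (1 + e) * n / (2 * l)"
      using t e n_pos by (simp add: l_def)
    have "(a / n)\<^sup>2 \<le> pi / l"
    proof -
      have "(a / n)\<^sup>2 = t\<^sup>2 / n" using n_pos by (simp add: t_def power_divide power2_eq_square)
      also have "\<dots> \<le> 2 * pi / (1 + e) * (t\<^sup>2 / n)"
      proof -
        have "1 \<le> 2 * pi / (1 + e)" using e pi_gt3 by (simp add: field_simps)
        from mult_right_mono[OF this, of "t\<^sup>2 / n"] show ?thesis by simp
      qed
      also have "\<dots> = pi / l" using e n_pos t by (simp add: l_def field_simps)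
      finally show ?thesis .
    qed
    then have "a / n \<le> G" unfolding G_def using a_pos by (simp add: real_le_rsqrt)
    have "2 / (e * n) = 2 / e\<^sup>2 * e / n"
      using e n_pos by (simp add: field_simps power2_eq_square)
    also have "\<dots> \<le> a * e / n"
      using a e n_pos by (intro divide_right_mono mult_right_mono) auto
    also have "\<dots> \<le> e * G"
      using mult_left_mono[OF \<open>a / n \<le> G\<close>, of e] e by (simp add: mult.commute)
    finally have small: "2 / (e * n) \<le> e * G" .
    have lower: "exp ((1 - e) * n / 2) * G ^ n / 2 \<le> vol n (vscale n t (lpball2 n))"
      using N0[OF _ l, of n] n radius by (simp add: vol_def vscale_lpball2_eq[OF t] G_def)
    have upper: "vol n (msum n (lpball1 n) (vscale n t (lpball2 n)))
        \<le> exp ((1 - e) * n / 2 + 3 * e * n) * G ^ n"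
      unfolding G_def by (rule vol_msum_lpball1_lpball2_le_gaussian[OF e(1) l t radius small[unfolded G_def]])
    have G_pos: "G > 0" using l by (simp add: G_def)
    have "vol n (msum n (lpball1 n) (vscale n t (lpball2 n))) / vol n (vscale n t (lpball2 n))
        \<le> exp ((1 - e) * n / 2 + 3 * e * n) * G ^ n / (exp ((1 - e) * n / 2) * G ^ n / 2)"
      using upper lower G_pos by (intro frac_le) auto
    also have "\<dots> = 2 * exp (3 * e * n)"
      using G_pos by (simp add: exp_add)
    also have "\<dots> \<le> exp (e * n) * exp (3 * e * n)"
      using two by (intro mult_right_mono) auto
    also have "\<dots> = exp (4 * e * n)"
      by (simp add: exp_add[symmetric])
    finally show "inflation_ratio n a \<le> exp (4 * e * n)"
      by (simp add: inflation_ratio_def t_def)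
  qed
qed

lemma inflation_ratio_le_power:
  assumes q: "q > 1" and n: "n > 0" and a: "sqrt n \<le> a * (q - 1)"
  shows "inflation_ratio n a \<le> q ^ n"
proof -
  have "0 < a * (q - 1)"
    using a n by (meson of_nat_0_less_iff order.strict_trans2 real_sqrt_gt_zero)
  then have a_pos: "a > 0" using q by (simp add: zero_less_mult_iff)
  have "(1 + a / sqrt n) / (a / sqrt n) = 1 + sqrt n / a"
    using a_pos n by (simp add: field_simps)
  also have "\<dots> \<le> q"
  proof -
    have "sqrt n / a \<le> q - 1"
      using a a_pos by (subst pos_divide_le_eq) (simp_all add: mult.commute)
    then show ?thesis by linarith
  qed
  finally have "((1 + a / sqrt n) / (a / sqrt n)) ^ n \<le> q ^ n"
    using a_pos n by (intro power_mono) auto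
  with vol_msum_div_vol_le[of "a / sqrt n" n] a_pos n show ?thesis
    by (simp add: inflation_ratio_def)
qed

theorem lemma3:
  fixes \<epsilon> :: real
  assumes "\<epsilon> > 0"
  shows "\<exists>a>0. \<forall>n::nat. n \<ge> 1 \<longrightarrow>
           vol n (msum n (lpball1 n) (vscale n (a / sqrt (real n)) (lpball2 n)))
             / vol n (vscale n (a / sqrt (real n)) (lpball2 n))
           \<le> 2 powr (\<epsilon> * real n)"
proof -
  define e where "e = min (\<epsilon> * ln 2 / 4) (1 / 2)"
  have e: "0 < e" "e \<le> 1 / 2" "4 * e \<le> \<epsilon> * ln 2" using assms by (auto simp: e_def)
  obtain N where large:
      "\<And>n a. N \<le> n \<Longrightarrow> 2 / e\<^sup>2 \<le> a \<Longrightarrow> inflation_ratio n a \<le> exp (4 * e * n)"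
    using inflation_ratio_le_exp[OF e(1,2)] by blast
  define a where "a = max (2 / e\<^sup>2) (sqrt N / (2 powr \<epsilon> - 1))"
  have q: "2 powr \<epsilon> > 1" using assms by simp
  have "inflation_ratio n a \<le> 2 powr (\<epsilon> * n)" if n: "n \<ge> 1" for n
  proof (cases "N \<le> n")
    case True
    have "inflation_ratio n a \<le> exp (4 * e * n)" by (rule large[OF True]) (simp add: a_def)
    also have "\<dots> \<le> exp (\<epsilon> * ln 2 * n)" using e by (simp add: mult_right_mono)
    finally show ?thesis by (simp add: powr_def mult_ac)
  next
    case False
    then have "sqrt n \<le> sqrt N" by simp
    also have "\<dots> \<le> a * (2 powr \<epsilon> - 1)" using q by (simp add: a_def flip: pos_divide_le_eq)
    finally have "inflation_ratio n a \<le> (2 powr \<epsilon>) ^ n"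
      using q n by (intro inflation_ratio_le_power) auto
    then show ?thesis by (simp add: powr_realpow[symmetric] powr_powr mult.commute)
  qed
  moreover have "a > 0" using e by (simp add: a_def less_max_iff_disj)
  ultimately show ?thesis unfolding inflation_ratio_def by blast
qed

end
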